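(* Let $k\ge 1$. Any unitary circuit composed of Clifford gates and $T$/$T^\dagger$ gates that implements the $(k+1)$-qubit multiply-controlled $Z$ gate $C^kZ = I^{\otimes(k+1)}-2\ket{1\cdots1}\bra{1\cdots1}$ contains at least $2k-2$ gates equal to $T$ or $T^\dagger$.
   Context: Clifford gates are unitaries mapping Pauli operators ($\pm$ tensor products of $I,X,Y,Z$) to Pauli operators under conjugation. $T=\mathrm{diag}(1,e^{i\pi/4})$. *)

theory Defs
  imports Complex_Main "Jordan_Normal_Form.Matrix"
begin

text \<open>n-qubit operators are 2^n x 2^n complex matrices; basis index i encodes
  qubit j in bit j of i.\<close>

definition qbit :: "nat \<Rightarrow> nat \<Rightarrow> nat" where
  "qbit j i = (i div 2 ^ j) mod 2"

definition dagger :: "complex mat \<Rightarrow> complex mat" where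
  "dagger A = mat (dim_col A) (dim_row A) (\<lambda>(i, j). cnj (A $$ (j, i)))"

definition is_unitary :: "nat \<Rightarrow> complex mat \<Rightarrow> bool" where
  "is_unitary n U \<longleftrightarrow> U \<in> carrier_mat (2^n) (2^n) \<and> U * dagger U = 1\<^sub>m (2^n)
     \<and> dagger U * U = 1\<^sub>m (2^n)"

datatype pauli1 = PI | PX | PY | PZ

fun pauli1_entry :: "pauli1 \<Rightarrow> nat \<Rightarrow> nat \<Rightarrow> complex" where
  "pauli1_entry PI a b = (if a = b then 1 else 0)"
| "pauli1_entry PX a b = (if a \<noteq> b then 1 else 0)"
| "pauli1_entry PY a b = (if a = 0 \<and> b = 1 then - \<i> else if a = 1 \<and> b = 0 then \<i> else 0)"
| "pauli1_entry PZ a b = (if a = b then (if a = 0 then 1 else -1) else 0)"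

definition pauli_tensor :: "nat \<Rightarrow> (nat \<Rightarrow> pauli1) \<Rightarrow> complex mat" where
  "pauli_tensor n p = mat (2^n) (2^n)
     (\<lambda>(r, c). \<Prod>j<n. pauli1_entry (p j) (qbit j r) (qbit j c))"

definition is_pauli :: "nat \<Rightarrow> complex mat \<Rightarrow> bool" where
  "is_pauli n P \<longleftrightarrow> (\<exists>p s. (s = 1 \<or> s = -1) \<and> P = s \<cdot>\<^sub>m pauli_tensor n p)"

definition is_clifford :: "nat \<Rightarrow> complex mat \<Rightarrow> bool" where
  "is_clifford n U \<longleftrightarrow> is_unitary n U \<and>
     (\<forall>P. is_pauli n P \<longrightarrow> is_pauli n (U * P * dagger U))"

definition T_on :: "nat \<Rightarrow> nat \<Rightarrow> complex mat" where
  "T_on n j = mat (2^n) (2^n) (\<lambda>(r, c). if r = c then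
      (if qbit j r = 1 then cis (pi / 4) else 1) else 0)"

definition Tdg_on :: "nat \<Rightarrow> nat \<Rightarrow> complex mat" where
  "Tdg_on n j = mat (2^n) (2^n) (\<lambda>(r, c). if r = c then
      (if qbit j r = 1 then cis (- pi / 4) else 1) else 0)"

datatype gate = Cliff "complex mat" | Tg nat | Tdg nat

definition gate_ok :: "nat \<Rightarrow> gate \<Rightarrow> bool" where
  "gate_ok n g = (case g of Cliff U \<Rightarrow> is_clifford n U | Tg j \<Rightarrow> j < n | Tdg j \<Rightarrow> j < n)"

definition gate_mat :: "nat \<Rightarrow> gate \<Rightarrow> complex mat" where
  "gate_mat n g = (case g of Cliff U \<Rightarrow> U | Tg j \<Rightarrow> T_on n j | Tdg j \<Rightarrow> Tdg_on n j)"

text \<open>Circuit [g1,...,gm] (g1 applied first) implements gm * ... * g1.\<close>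
fun circuit_mat :: "nat \<Rightarrow> gate list \<Rightarrow> complex mat" where
  "circuit_mat n [] = 1\<^sub>m (2^n)"
| "circuit_mat n (g # gs) = circuit_mat n gs * gate_mat n g"

definition is_T_gate :: "gate \<Rightarrow> bool" where
  "is_T_gate g = (case g of Cliff _ \<Rightarrow> False | _ \<Rightarrow> True)"

definition t_count :: "gate list \<Rightarrow> nat" where
  "t_count gs = length (filter is_T_gate gs)"

definition CkZ :: "nat \<Rightarrow> complex mat" where
  "CkZ k = mat (2^(k+1)) (2^(k+1)) (\<lambda>(r, c). if r = c then
      (if r = 2^(k+1) - 1 then -1 else 1) else 0)"

end

theory Submission
  imports Defs
begin

(* Track the Pauli expansion of U X\<^sub>0 U\<^sup>\<dagger>, where X\<^sub>0 is the Pauli X on qubit 0 and U is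
   the circuit applied so far; the coefficient of the Pauli P in A is trace (P A) / 2^n.
   For A = X\<^sub>0 every coefficient is 0 or 1. Conjugating by a Clifford gate permutes the
   Paulis up to sign, so it permutes the coefficients up to sign. Conjugating by T or T\<^sup>\<dagger>
   on qubit j fixes the Paulis with I or Z on qubit j and mixes those with X or Y there
   with weights +-1/sqrt 2. Hence after t T-gates every coefficient z satisfies
   z * sqrt 2 ^ t \<in> Z[sqrt 2, i]. For U = C^kZ the coefficient of X\<^sub>0 is 1 - 2^(1-k); its
   numerator 2^(k-1) - 1 is odd, which forces sqrt 2 ^ t to supply the whole denominator
   2^(k-1), i.e. t \<ge> 2k - 2. *)

lemma index_mult_mat_sum:
  "A \<in> carrier_mat n m \<Longrightarrow> B \<in> carrier_mat m p \<Longrightarrow> i < n \<Longrightarrow> j < p \<Longrightarrow>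
   (A * B) $$ (i, j) = (\<Sum>k<m. A $$ (i, k) * B $$ (k, j))"
  by (simp add: scalar_prod_def atLeast0LessThan)

definition trace :: "'a::comm_monoid_add mat \<Rightarrow> 'a" where
  "trace A = (\<Sum>i<dim_row A. A $$ (i, i))"

lemma trace_mult:
  fixes A B :: "'a::comm_semiring_0 mat"
  assumes "A \<in> carrier_mat n m" "B \<in> carrier_mat m n"
  shows "trace (A * B) = (\<Sum>i<n. \<Sum>k<m. A $$ (i, k) * B $$ (k, i))"
  using assms by (auto simp: trace_def scalar_prod_def atLeast0LessThan intro!: sum.cong)

lemma trace_mult_comm:
  fixes A B :: "'a::comm_semiring_0 mat"
  assumes "A \<in> carrier_mat n m" "B \<in> carrier_mat m n"
  shows "trace (A * B) = trace (B * A)"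
  using assms by (simp add: trace_mult[of A n m B] trace_mult[of B m n A] mult.commute sum.swap[of _ "{..<n}"])

lemma trace_smult:
  fixes A :: "'a::comm_semiring_0 mat"
  assumes "A \<in> carrier_mat n n"
  shows "trace (s \<cdot>\<^sub>m A) = s * trace A"
proof -
  have "trace (s \<cdot>\<^sub>m A) = (\<Sum>i<n. s * A $$ (i, i))"
    using assms by (auto simp: trace_def intro!: sum.cong)
  also have "\<dots> = s * trace A"
    using assms by (simp add: trace_def sum_distrib_left)
  finally show ?thesis .
qed

lemma trace_add:
  fixes A B :: "'a::comm_monoid_add mat"
  assumes "A \<in> carrier_mat n n" "B \<in> carrier_mat n n"
  shows "trace (A + B) = trace A + trace B"
proof -
  have "trace (A + B) = (\<Sum>i<n. A $$ (i, i) + B $$ (i, i))"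
    using assms by (auto simp: trace_def intro!: sum.cong)
  also have "\<dots> = trace A + trace B"
    using assms by (simp add: trace_def sum.distrib)
  finally show ?thesis .
qed

lemma trace_conj_cyclic:
  fixes P U A V :: "'a::comm_semiring_0 mat"
  assumes "P \<in> carrier_mat n n" "U \<in> carrier_mat n n" "A \<in> carrier_mat n n" "V \<in> carrier_mat n n"
  shows "trace (P * (U * A * V)) = trace (V * P * U * A)"
proof -
  have "trace (P * (U * A * V)) = trace ((P * U * A) * V)"
    using assms by (simp add: assoc_mult_mat[of _ n n _ n _ n] mult_carrier_mat[of _ n n])
  also have "\<dots> = trace (V * (P * U * A))"
    using assms by (intro trace_mult_comm) auto
  also have "\<dots> = trace (V * P * U * A)"
    using assms by (simp add: assoc_mult_mat[of _ n n _ n _ n] mult_carrier_mat[of _ n n])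
  finally show ?thesis .
qed

lemma dagger_carrier [simp]: "A \<in> carrier_mat m n \<Longrightarrow> dagger A \<in> carrier_mat n m"
  by (simp add: dagger_def)

lemma dagger_mult:
  assumes A: "A \<in> carrier_mat l m" and B: "B \<in> carrier_mat m n"
  shows "dagger (A * B) = dagger B * dagger A"
proof (rule eq_matI)
  fix i j assume "i < dim_row (dagger B * dagger A)" "j < dim_col (dagger B * dagger A)"
  then have i: "i < n" and j: "j < l" using A B by (simp_all add: dagger_def)
  have "dagger (A * B) $$ (i, j) = (\<Sum>k<m. cnj (A $$ (j, k)) * cnj (B $$ (k, i)))"
    using A B i j by (simp add: dagger_def index_mult_mat_sum[OF A B j i])
  also have "\<dots> = (\<Sum>k<m. dagger B $$ (i, k) * dagger A $$ (k, j))"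
    using A B i j by (intro sum.cong) (auto simp: dagger_def mult.commute)
  also have "\<dots> = (dagger B * dagger A) $$ (i, j)"
    using A B i j by (intro index_mult_mat_sum[symmetric]) auto
  finally show "dagger (A * B) $$ (i, j) = (dagger B * dagger A) $$ (i, j)" .
qed (use A B in \<open>simp_all add: dagger_def\<close>)

lemma dagger_one [simp]: "dagger (1\<^sub>m n) = 1\<^sub>m n"
  by (rule eq_matI) (auto simp: dagger_def)

lemma dagger_mat_diag: "dagger (mat_diag n f) = mat_diag n (\<lambda>i. cnj (f i))"
  by (rule eq_matI) (auto simp: dagger_def mat_diag_def)

lemma unitary_conj_cancel:
  assumes U: "is_unitary n U" and Q: "Q \<in> carrier_mat (2^n) (2^n)"
  shows "dagger U * (U * Q * dagger U) * U = Q"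
proof -
  have Uc: "U \<in> carrier_mat (2^n) (2^n)" and UU: "dagger U * U = 1\<^sub>m (2^n)" "U * dagger U = 1\<^sub>m (2^n)"
    using U by (auto simp: is_unitary_def)
  have "dagger U * (U * Q * dagger U) * U = (dagger U * U) * Q * (dagger U * U)"
    using Uc Q by (simp add: assoc_mult_mat[of _ "2^n" "2^n" _ "2^n" _ "2^n"]
        mult_carrier_mat[of _ "2^n" "2^n"])
  then show ?thesis using UU Q by simp
qed

lemma qbit_Suc: "qbit (Suc j) r = qbit j (r div 2)"
  by (simp add: qbit_def div_mult2_eq)

lemma qbit_less_2: "qbit j r < 2"
  by (simp add: qbit_def)

lemma qbit_mask: "j < n \<Longrightarrow> qbit j (2^n - 1) = 1"
proof -
  assume "j < n"
  then have "bit (mask n :: nat) j" by (simp add: bit_mask_iff)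
  then show ?thesis by (simp add: qbit_def bit_iff_odd mask_eq_exp_minus_1 odd_iff_mod_2_eq_one)
qed

lemma sum_lessThan_double:
  fixes h :: "nat \<Rightarrow> 'a::comm_monoid_add"
  shows "(\<Sum>r<2 * N. h r) = (\<Sum>m<N. h (2 * m) + h (2 * m + 1))"
proof (induction N)
  case (Suc N)
  have "{..<2 * Suc N} = insert (2 * N + 1) (insert (2 * N) {..<2 * N})" by auto
  then show ?case using Suc by (simp add: add_ac)
qed simp

lemma sum_prod_qbit:
  fixes g :: "nat \<Rightarrow> nat \<Rightarrow> 'a::comm_semiring_1"
  shows "(\<Sum>r<2^n. \<Prod>j<n. g j (qbit j r)) = (\<Prod>j<n. g j 0 + g j 1)"
proof (induction n arbitrary: g)
  case (Suc n)
  have "(\<Sum>r<2^Suc n. \<Prod>j<Suc n. g j (qbit j r))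
      = (\<Sum>r<2 * 2^n. g 0 (qbit 0 r) * (\<Prod>j<n. g (Suc j) (qbit j (r div 2))))"
    by (simp add: prod.lessThan_Suc_shift qbit_Suc del: prod.lessThan_Suc)
  also have "\<dots> = (g 0 0 + g 0 1) * (\<Sum>m<2^n. \<Prod>j<n. g (Suc j) (qbit j m))"
    by (simp add: sum_lessThan_double qbit_def distrib_right sum_distrib_left)
  also have "\<dots> = (\<Prod>j<Suc n. g j 0 + g j 1)"
    using Suc.IH[of "\<lambda>j. g (Suc j)"] by (simp add: prod.lessThan_Suc_shift del: prod.lessThan_Suc)
  finally show ?case .
qed simp

lemma sum_sum_prod_qbit:
  fixes f :: "nat \<Rightarrow> nat \<Rightarrow> nat \<Rightarrow> 'a::comm_semiring_1"
  shows "(\<Sum>r<2^n. \<Sum>c<2^n. \<Prod>j<n. f j (qbit j r) (qbit j c)) = (\<Prod>j<n. \<Sum>a<2. \<Sum>b<2. f j a b)"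
proof -
  have "(\<Sum>c<2^n. \<Prod>j<n. f j (qbit j r) (qbit j c)) = (\<Prod>j<n. f j (qbit j r) 0 + f j (qbit j r) 1)" for r
    by (rule sum_prod_qbit)
  then show ?thesis
    using sum_prod_qbit[of "\<lambda>j a. f j a 0 + f j a 1" n] by (simp add: numeral_2_eq_2)
qed

abbreviation sqrt2 :: complex where
  "sqrt2 \<equiv> complex_of_real (sqrt 2)"

lemma sqrt2_times_sqrt2: "sqrt2 * sqrt2 = 2"
  by (simp flip: of_real_mult)

definition Zsqrt2i :: "complex set" where
  "Zsqrt2i = {z. \<exists>a b c d::int. z = of_int a + of_int b * sqrt2 + \<i> * (of_int c + of_int d * sqrt2)}"

lemma Zsqrt2iI:
  "of_int a + of_int b * sqrt2 + \<i> * (of_int c + of_int d * sqrt2) \<in> Zsqrt2i"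
  unfolding Zsqrt2i_def by blast

lemma Zsqrt2iE:
  assumes "z \<in> Zsqrt2i"
  obtains a b c d :: int where "z = of_int a + of_int b * sqrt2 + \<i> * (of_int c + of_int d * sqrt2)"
  using assms unfolding Zsqrt2i_def by blast

lemma Zsqrt2i_0: "0 \<in> Zsqrt2i" and Zsqrt2i_1: "1 \<in> Zsqrt2i" and Zsqrt2i_sqrt2: "sqrt2 \<in> Zsqrt2i"
  using Zsqrt2iI[of 0 0 0 0] Zsqrt2iI[of 1 0 0 0] Zsqrt2iI[of 0 1 0 0] by simp_all

lemma Zsqrt2i_add:
  assumes "x \<in> Zsqrt2i" "y \<in> Zsqrt2i"
  shows "x + y \<in> Zsqrt2i"
proof -
  obtain a b c d :: int where x: "x = of_int a + of_int b * sqrt2 + \<i> * (of_int c + of_int d * sqrt2)"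
    using assms(1) by (rule Zsqrt2iE)
  obtain a' b' c' d' :: int where y: "y = of_int a' + of_int b' * sqrt2 + \<i> * (of_int c' + of_int d' * sqrt2)"
    using assms(2) by (rule Zsqrt2iE)
  have "x + y = of_int (a + a') + of_int (b + b') * sqrt2 + \<i> * (of_int (c + c') + of_int (d + d') * sqrt2)"
    unfolding x y by (simp add: algebra_simps)
  then show ?thesis by (metis Zsqrt2iI)
qed

lemma Zsqrt2i_uminus:
  assumes "x \<in> Zsqrt2i"
  shows "- x \<in> Zsqrt2i"
proof -
  obtain a b c d :: int where x: "x = of_int a + of_int b * sqrt2 + \<i> * (of_int c + of_int d * sqrt2)"
    using assms by (rule Zsqrt2iE)
  have "- x = of_int (- a) + of_int (- b) * sqrt2 + \<i> * (of_int (- c) + of_int (- d) * sqrt2)"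
    unfolding x by (simp add: algebra_simps)
  then show ?thesis by (metis Zsqrt2iI)
qed

lemma Zsqrt2i_mult:
  assumes "x \<in> Zsqrt2i" "y \<in> Zsqrt2i"
  shows "x * y \<in> Zsqrt2i"
proof -
  obtain a b c d :: int where x: "x = of_int a + of_int b * sqrt2 + \<i> * (of_int c + of_int d * sqrt2)"
    using assms(1) by (rule Zsqrt2iE)
  obtain a' b' c' d' :: int where y: "y = of_int a' + of_int b' * sqrt2 + \<i> * (of_int c' + of_int d' * sqrt2)"
    using assms(2) by (rule Zsqrt2iE)
  have "(of_int a + of_int b * w + \<i> * (of_int c + of_int d * w)) *
      (of_int a' + of_int b' * w + \<i> * (of_int c' + of_int d' * w)) =
      of_int (a*a' + 2*b*b' - c*c' - 2*d*d') + of_int (a*b' + b*a' - c*d' - d*c') * w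
      + \<i> * (of_int (a*c' + c*a' + 2*b*d' + 2*d*b') + of_int (a*d' + d*a' + b*c' + c*b') * w)"
    if w: "w * w = 2" for w :: complex
  proof -
    have ww: "w * (w * z) = 2 * z" for z using w by (simp flip: mult.assoc)
    show ?thesis by (simp add: algebra_simps w ww)
  qed
  from this[OF sqrt2_times_sqrt2] show ?thesis
    unfolding x y by (metis Zsqrt2iI)
qed

definition sqrt2_denom :: "nat \<Rightarrow> complex set" where
  "sqrt2_denom t = {z. z * sqrt2 ^ t \<in> Zsqrt2i}"

lemma sqrt2_denom_uminus: "z \<in> sqrt2_denom t \<Longrightarrow> - z \<in> sqrt2_denom t"
  unfolding sqrt2_denom_def using Zsqrt2i_uminus by fastforce

lemma sqrt2_denom_Suc_lincomb:
  assumes "\<alpha> * sqrt2 \<in> Zsqrt2i" "\<beta> * sqrt2 \<in> Zsqrt2i" "u \<in> sqrt2_denom t" "v \<in> sqrt2_denom t"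
  shows "\<alpha> * u + \<beta> * v \<in> sqrt2_denom (Suc t)"
proof -
  have "(\<alpha> * u + \<beta> * v) * sqrt2 ^ Suc t = (\<alpha> * sqrt2) * (u * sqrt2 ^ t) + (\<beta> * sqrt2) * (v * sqrt2 ^ t)"
    by (simp add: algebra_simps)
  then show ?thesis
    using assms by (simp add: sqrt2_denom_def Zsqrt2i_add Zsqrt2i_mult)
qed

lemma sqrt2_denom_mono: "t \<le> t' \<Longrightarrow> sqrt2_denom t \<subseteq> sqrt2_denom t'"
proof (rule lift_Suc_mono_le)
  fix t show "sqrt2_denom t \<subseteq> sqrt2_denom (Suc t)"
    using sqrt2_denom_Suc_lincomb[of 1 0 _ t] Zsqrt2i_sqrt2 Zsqrt2i_0 by auto
qed

lemma odd_div_sqrt2_notin_Zsqrt2i: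
  assumes "odd q"
  shows "of_int q / sqrt2 \<notin> Zsqrt2i"
proof
  assume "of_int q / sqrt2 \<in> Zsqrt2i"
  then obtain a b c d :: int
    where "of_int q / sqrt2 = of_int a + of_int b * sqrt2 + \<i> * (of_int c + of_int d * sqrt2)"
    by (rule Zsqrt2iE)
  then have "of_int q = (of_int a + of_int b * sqrt2 + \<i> * (of_int c + of_int d * sqrt2)) * sqrt2"
    by (simp add: field_simps)
  then have "Re (of_int q) = Re ((of_int a + of_int b * sqrt2 + \<i> * (of_int c + of_int d * sqrt2)) * sqrt2)"
    by simp
  then have h: "real_of_int (q - 2 * b) = of_int a * sqrt 2"
    by (simp add: algebra_simps)
  have "real_of_int ((q - 2 * b)^2) = (of_int a * sqrt 2)^2"
    by (simp only: of_int_power h)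
  also have "\<dots> = real_of_int (2 * a^2)"
    by (simp add: power_mult_distrib)
  finally have "(q - 2 * b)^2 = 2 * a^2"
    by (simp only: of_int_eq_iff)
  moreover have "odd ((q - 2 * b)^2)" using assms by simp
  ultimately show False by simp
qed

lemma odd_dyadic_sqrt2_denom:
  assumes q: "odd q" and z: "of_int q / 2^m \<in> sqrt2_denom t"
  shows "2 * m \<le> t"
proof (rule ccontr)
  assume "\<not> 2 * m \<le> t"
  then have m: "m \<ge> 1" and "t \<le> 2 * m - 1" by auto
  then have "of_int q / 2^m \<in> sqrt2_denom (2 * m - 1)"
    using z sqrt2_denom_mono by blast
  moreover have "of_int q / 2^m * sqrt2 ^ (2 * m - 1) = of_int q / sqrt2"
  proof -
    have "sqrt2 ^ (2 * m - 1) * sqrt2 = (sqrt2^2)^m"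
      using m by (simp add: power_mult flip: power_Suc2)
    also have "\<dots> = 2^m"
      by (simp flip: of_real_power)
    finally show ?thesis by (simp add: field_simps)
  qed
  ultimately show False
    using odd_div_sqrt2_notin_Zsqrt2i[OF q] by (simp add: sqrt2_denom_def)
qed

lemma pauli_tensor_carrier [simp]: "pauli_tensor n p \<in> carrier_mat (2^n) (2^n)"
  by (simp add: pauli_tensor_def)

lemma index_pauli_tensor:
  "r < 2^n \<Longrightarrow> c < 2^n \<Longrightarrow>
   pauli_tensor n p $$ (r, c) = (\<Prod>j<n. pauli1_entry (p j) (qbit j r) (qbit j c))"
  by (simp add: pauli_tensor_def)

lemma sum_less_2: "(\<Sum>a<2. f a) = f 0 + f (1::nat)"
  by (simp add: numeral_2_eq_2)

lemma trace_pauli_tensor_mult: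
  "trace (pauli_tensor n p * pauli_tensor n q) =
   (\<Prod>j<n. \<Sum>a<2. \<Sum>b<2. pauli1_entry (p j) a b * pauli1_entry (q j) b a)"
proof -
  have "trace (pauli_tensor n p * pauli_tensor n q) = (\<Sum>r<2^n. \<Sum>c<2^n. \<Prod>j<n.
      pauli1_entry (p j) (qbit j r) (qbit j c) * pauli1_entry (q j) (qbit j c) (qbit j r))"
    by (simp add: trace_mult[of _ "2^n" "2^n"] index_pauli_tensor prod.distrib)
  also have "\<dots> = (\<Prod>j<n. \<Sum>a<2. \<Sum>b<2. pauli1_entry (p j) a b * pauli1_entry (q j) b a)"
    by (rule sum_sum_prod_qbit[of "\<lambda>j a b. pauli1_entry (p j) a b * pauli1_entry (q j) b a"])
  finally show ?thesis .
qed

lemma trace_pauli_tensor_mult_01: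
  "trace (pauli_tensor n p * pauli_tensor n q) / 2^n \<in> {0, 1}"
proof -
  define f where "f j = (\<Sum>a<2. \<Sum>b<2. pauli1_entry (p j) a b * pauli1_entry (q j) b a) / 2" for j
  have f01: "f j \<in> {0, 1}" for j
    by (cases "p j"; cases "q j") (simp_all add: f_def sum_less_2)
  have "trace (pauli_tensor n p * pauli_tensor n q) / 2^n = (\<Prod>j<n. f j)"
    by (simp add: trace_pauli_tensor_mult f_def prod_dividef)
  also have "\<dots> \<in> {0, 1}"
  proof (cases "\<exists>j<n. f j = 0")
    case False
    then have "\<forall>j<n. f j = 1" using f01 by blast
    then show ?thesis by simp
  qed auto
  finally show ?thesis .
qed

lemma is_pauli_carrier: "is_pauli n P \<Longrightarrow> P \<in> carrier_mat (2^n) (2^n)"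
  by (auto simp: is_pauli_def)

lemma is_pauli_pauli_tensor: "is_pauli n (pauli_tensor n p)"
  unfolding is_pauli_def by (intro exI[of _ p] exI[of _ 1]) (auto intro: eq_matI)

lemma finite_is_pauli: "finite {P. is_pauli n P}"
proof -
  let ?L = "{xs. set xs \<subseteq> {PI, PX, PY, PZ} \<and> length xs = n}"
    and ?F = "\<lambda>(s, xs). s \<cdot>\<^sub>m pauli_tensor n (\<lambda>j. xs ! j)"
  have "{P. is_pauli n P} \<subseteq> ?F ` ({1, -1} \<times> ?L)"
  proof
    fix P assume "P \<in> {P. is_pauli n P}"
    then obtain p s where s: "s = 1 \<or> s = -1" and P: "P = s \<cdot>\<^sub>m pauli_tensor n p"
      unfolding is_pauli_def by blast
    have "pauli_tensor n p = pauli_tensor n (\<lambda>j. map p [0..<n] ! j)"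
      unfolding pauli_tensor_def by (rule cong_mat) (auto intro!: prod.cong)
    moreover have "map p [0..<n] \<in> ?L"
      by (auto intro: pauli1.exhaust)
    ultimately show "P \<in> ?F ` ({1, -1} \<times> ?L)"
      using s P by force
  qed
  moreover have "finite ({1::complex, -1} \<times> ?L)"
    by (intro finite_cartesian_product finite_lists_length_eq) auto
  ultimately show ?thesis by (meson finite_surj)
qed

text \<open>Conjugation by a Clifford gate is injective on the finitely many Paulis, hence onto them.\<close>

lemma clifford_conj_onto_pauli:
  assumes C: "is_clifford n C" and P: "is_pauli n P"
  obtains Q where "is_pauli n Q" "C * Q * dagger C = P"
proof -
  let ?S = "{P. is_pauli n P}" and ?f = "\<lambda>Q. C * Q * dagger C"
  have U: "is_unitary n C" using C by (simp add: is_clifford_def)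
  have "?f ` ?S \<subseteq> ?S" using C by (auto simp: is_clifford_def)
  moreover have "inj_on ?f ?S"
  proof (rule inj_on_inverseI)
    show "dagger C * ?f Q * C = Q" if "Q \<in> ?S" for Q
      using that by (simp add: unitary_conj_cancel[OF U] is_pauli_carrier)
  qed
  ultimately have "?f ` ?S = ?S" by (rule endo_inj_surj[OF finite_is_pauli])
  then have "P \<in> ?f ` ?S" using P by simp
  then obtain Q where "Q \<in> ?S" "P = ?f Q" by (rule imageE)
  then show ?thesis using that by simp
qed

definition pauli_coeffs_in :: "nat \<Rightarrow> nat \<Rightarrow> complex mat \<Rightarrow> bool" where
  "pauli_coeffs_in n t A \<longleftrightarrow> A \<in> carrier_mat (2^n) (2^n) \<and>
     (\<forall>p. trace (pauli_tensor n p * A) / 2^n \<in> sqrt2_denom t)"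

lemma pauli_coeffs_in_pauli_tensor: "pauli_coeffs_in n 0 (pauli_tensor n q)"
proof -
  have "trace (pauli_tensor n p * pauli_tensor n q) / 2^n \<in> sqrt2_denom 0" for p
    using trace_pauli_tensor_mult_01[of n p q] Zsqrt2i_0 Zsqrt2i_1 by (auto simp: sqrt2_denom_def)
  then show ?thesis by (simp add: pauli_coeffs_in_def)
qed

lemma pauli_coeffs_in_clifford_conj:
  assumes C: "is_clifford n C" and A: "pauli_coeffs_in n t A"
  shows "pauli_coeffs_in n t (C * A * dagger C)"
  unfolding pauli_coeffs_in_def
proof (intro conjI allI)
  have U: "is_unitary n C" using C by (simp add: is_clifford_def)
  then have Cc: "C \<in> carrier_mat (2^n) (2^n)" by (simp add: is_unitary_def)
  have Ac: "A \<in> carrier_mat (2^n) (2^n)" using A by (simp add: pauli_coeffs_in_def)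
  show "C * A * dagger C \<in> carrier_mat (2^n) (2^n)" using Cc Ac by (simp add: mult_carrier_mat[of _ "2^n" "2^n"])
  fix p
  obtain Q where Q: "is_pauli n Q" "C * Q * dagger C = pauli_tensor n p"
    using clifford_conj_onto_pauli[OF C is_pauli_pauli_tensor] .
  then obtain q s where s: "s = 1 \<or> s = -1" and Qq: "Q = s \<cdot>\<^sub>m pauli_tensor n q"
    unfolding is_pauli_def by blast
  have "trace (pauli_tensor n p * (C * A * dagger C)) = trace (dagger C * pauli_tensor n p * C * A)"
    using Cc Ac by (intro trace_conj_cyclic) auto
  also have "dagger C * pauli_tensor n p * C = Q"
    using unitary_conj_cancel[OF U is_pauli_carrier[OF Q(1)]] Q(2) by simp
  finally have "trace (pauli_tensor n p * (C * A * dagger C)) / 2^n = s * (trace (pauli_tensor n q * A) / 2^n)"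
    using Ac by (simp add: Qq mult_smult_assoc_mat[of _ "2^n" "2^n"] trace_smult[of _ "2^n"]
        mult_carrier_mat[of _ "2^n" "2^n"])
  moreover have "trace (pauli_tensor n q * A) / 2^n \<in> sqrt2_denom t"
    using A by (simp add: pauli_coeffs_in_def)
  ultimately show "trace (pauli_tensor n p * (C * A * dagger C)) / 2^n \<in> sqrt2_denom t"
    using s sqrt2_denom_uminus by auto
qed

definition phase_on :: "nat \<Rightarrow> nat \<Rightarrow> complex \<Rightarrow> complex mat" where
  "phase_on n j c = mat_diag (2^n) (\<lambda>r. if qbit j r = 1 then c else 1)"

lemma T_on_eq_phase_on: "T_on n j = phase_on n j (cis (pi / 4))"
  and Tdg_on_eq_phase_on: "Tdg_on n j = phase_on n j (cis (- pi / 4))"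
  by (auto intro!: eq_matI simp: T_on_def Tdg_on_def phase_on_def mat_diag_def)

lemma phase_conj_pauli_tensor:
  assumes j: "j < n"
    and slot: "\<And>a b. a < 2 \<Longrightarrow> b < 2 \<Longrightarrow>
      cnj (if a = 1 then c else 1) * pauli1_entry (p j) a b * (if b = 1 then c else 1)
      = \<alpha> * pauli1_entry x a b + \<beta> * pauli1_entry y a b"
  shows "dagger (phase_on n j c) * pauli_tensor n p * phase_on n j c =
    \<alpha> \<cdot>\<^sub>m pauli_tensor n (p(j := x)) + \<beta> \<cdot>\<^sub>m pauli_tensor n (p(j := y))" (is "?L = ?R")
proof (rule eq_matI)
  fix r s assume "r < dim_row ?R" "s < dim_col ?R"
  then have r: "r < 2^n" and s: "s < 2^n" by (simp_all add: pauli_tensor_def)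
  have dims: "dim_row (pauli_tensor n p') = 2^n" "dim_col (pauli_tensor n p') = 2^n" for p'
    by (simp_all add: pauli_tensor_def)
  have entry_split: "pauli_tensor n p' $$ (r, s) = pauli1_entry (p' j) (qbit j r) (qbit j s) *
      (\<Prod>i\<in>{..<n} - {j}. pauli1_entry (p' i) (qbit i r) (qbit i s))" for p'
    using j r s by (simp add: index_pauli_tensor prod.remove)
  define R where "R = (\<Prod>i\<in>{..<n} - {j}. pauli1_entry (p i) (qbit i r) (qbit i s))"
  have R_upd: "(\<Prod>i\<in>{..<n} - {j}. pauli1_entry ((p(j := z)) i) (qbit i r) (qbit i s)) = R" for z
    unfolding R_def by (rule prod.cong) auto
  have "?L $$ (r, s) =
      cnj (if qbit j r = 1 then c else 1) * pauli_tensor n p $$ (r, s) * (if qbit j s = 1 then c else 1)"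
    using r s by (simp add: phase_on_def dagger_mat_diag mat_diag_mult_left[of _ "2^n" "2^n"]
        mat_diag_mult_right[of _ "2^n" "2^n"])
  also have "\<dots> = (\<alpha> * pauli1_entry x (qbit j r) (qbit j s) + \<beta> * pauli1_entry y (qbit j r) (qbit j s)) * R"
    by (simp add: entry_split R_def slot[OF qbit_less_2 qbit_less_2, symmetric] mult_ac)
  also have "\<dots> = ?R $$ (r, s)"
    using r s by (simp add: dims entry_split R_upd R_def distrib_right mult.assoc)
  finally show "?L $$ (r, s) = ?R $$ (r, s)" .
qed (simp_all add: phase_on_def pauli_tensor_def dagger_def mat_diag_def)

text \<open>Conjugation by \<open>diag(1, c)\<close> fixes I and Z and maps X and Y to combinations of X and Y
  with coefficients \<open>Re c\<close> and \<open>\<plusminus>Im c\<close>.\<close>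

lemma phase_conj_pauli1:
  fixes c :: complex
  assumes c: "cnj c * c = 1"
  obtains \<alpha> \<beta> x y
  where "\<alpha> \<in> {0, 1, of_real (Re c), of_real (Im c), - of_real (Im c)}"
    and "\<beta> \<in> {0, 1, of_real (Re c), of_real (Im c), - of_real (Im c)}"
    and "\<And>a b. a < 2 \<Longrightarrow> b < 2 \<Longrightarrow>
      cnj (if a = 1 then c else 1) * pauli1_entry z a b * (if b = 1 then c else 1)
      = \<alpha> * pauli1_entry x a b + \<beta> * pauli1_entry y a b"
proof -
  have bit_cases: "a < 2 \<Longrightarrow> a = 0 \<or> a = 1" for a :: nat by auto
  show ?thesis
  proof (cases z)
    case PX
    show ?thesis
      by (rule that[of "of_real (Re c)" "- of_real (Im c)" PX PY]) (auto dest!: bit_cases simp: PX complex_eq_iff)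
  next
    case PY
    show ?thesis
      by (rule that[of "of_real (Im c)" "of_real (Re c)" PX PY]) (auto dest!: bit_cases simp: PY complex_eq_iff)
  qed (rule that[of 1 0 z z], simp, simp, use c in \<open>auto dest!: bit_cases simp: mult.commute\<close>)+
qed

lemma pauli_coeffs_in_phase_conj:
  assumes A: "pauli_coeffs_in n t A" and j: "j < n" and c: "cnj c * c = 1"
    and Re_c: "of_real (Re c) * sqrt2 \<in> Zsqrt2i" and Im_c: "of_real (Im c) * sqrt2 \<in> Zsqrt2i"
  shows "pauli_coeffs_in n (Suc t) (phase_on n j c * A * dagger (phase_on n j c))"
  unfolding pauli_coeffs_in_def
proof (intro conjI allI)
  let ?D = "phase_on n j c"
  have Dc: "?D \<in> carrier_mat (2^n) (2^n)" by (simp add: phase_on_def)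
  have Ac: "A \<in> carrier_mat (2^n) (2^n)" using A by (simp add: pauli_coeffs_in_def)
  show "?D * A * dagger ?D \<in> carrier_mat (2^n) (2^n)" using Dc Ac by (simp add: mult_carrier_mat[of _ "2^n" "2^n"])
  fix p
  obtain \<alpha> \<beta> x y
    where \<alpha>: "\<alpha> \<in> {0, 1, of_real (Re c), of_real (Im c), - of_real (Im c)}"
      and \<beta>: "\<beta> \<in> {0, 1, of_real (Re c), of_real (Im c), - of_real (Im c)}"
    and slot: "\<And>a b. a < 2 \<Longrightarrow> b < 2 \<Longrightarrow>
      cnj (if a = 1 then c else 1) * pauli1_entry (p j) a b * (if b = 1 then c else 1)
      = \<alpha> * pauli1_entry x a b + \<beta> * pauli1_entry y a b"
    using phase_conj_pauli1[OF c, of "p j"] by blast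
  have coeff_sqrt2: "\<gamma> * sqrt2 \<in> Zsqrt2i"
    if "\<gamma> \<in> {0, 1, of_real (Re c), of_real (Im c), - of_real (Im c)}" for \<gamma>
    using that Re_c Im_c Zsqrt2i_0 Zsqrt2i_sqrt2 Zsqrt2i_uminus[OF Im_c] by auto
  have "trace (pauli_tensor n p * (?D * A * dagger ?D)) = trace (dagger ?D * pauli_tensor n p * ?D * A)"
    using Dc Ac by (intro trace_conj_cyclic) auto
  also have "\<dots> = \<alpha> * trace (pauli_tensor n (p(j := x)) * A) + \<beta> * trace (pauli_tensor n (p(j := y)) * A)"
    using Ac by (simp add: phase_conj_pauli_tensor[where p = p, OF j slot] add_mult_distrib_mat[of _ "2^n" "2^n"]
        mult_smult_assoc_mat[of _ "2^n" "2^n"] trace_add[of _ "2^n"] trace_smult[of _ "2^n"]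
        mult_carrier_mat[of _ "2^n" "2^n"])
  finally have "trace (pauli_tensor n p * (?D * A * dagger ?D)) / 2^n =
      \<alpha> * (trace (pauli_tensor n (p(j := x)) * A) / 2^n) + \<beta> * (trace (pauli_tensor n (p(j := y)) * A) / 2^n)"
    by (simp add: add_divide_distrib)
  also have "\<dots> \<in> sqrt2_denom (Suc t)"
    using A \<alpha> \<beta> by (intro sqrt2_denom_Suc_lincomb coeff_sqrt2) (auto simp: pauli_coeffs_in_def)
  finally show "trace (pauli_tensor n p * (?D * A * dagger ?D)) / 2^n \<in> sqrt2_denom (Suc t)" .
qed

lemma gate_mat_carrier: "gate_ok n g \<Longrightarrow> gate_mat n g \<in> carrier_mat (2^n) (2^n)"
  by (cases g) (auto simp: gate_ok_def gate_mat_def is_clifford_def is_unitary_def T_on_def Tdg_on_def)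

lemma T_phase_conditions:
  assumes "c = cis (pi / 4) \<or> c = cis (- pi / 4)"
  shows "cnj c * c = 1" "of_real (Re c) * sqrt2 \<in> Zsqrt2i" "of_real (Im c) * sqrt2 \<in> Zsqrt2i"
proof -
  have "of_real (Re c) * sqrt2 = 1" "of_real (Im c) * sqrt2 = 1 \<or> of_real (Im c) * sqrt2 = -1"
    using assms by (auto simp: cos_45 sin_45 simp flip: of_real_mult)
  then show "cnj c * c = 1" "of_real (Re c) * sqrt2 \<in> Zsqrt2i" "of_real (Im c) * sqrt2 \<in> Zsqrt2i"
    using assms Zsqrt2i_1 Zsqrt2i_uminus[OF Zsqrt2i_1] by (auto simp: cis_cnj cis_mult)
qed

lemma pauli_coeffs_in_gate_conj:
  assumes g: "gate_ok n g" and A: "pauli_coeffs_in n t A"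
  shows "pauli_coeffs_in n (t + (if is_T_gate g then 1 else 0)) (gate_mat n g * A * dagger (gate_mat n g))"
proof (cases g)
  case (Cliff U)
  then show ?thesis using g A pauli_coeffs_in_clifford_conj
    by (simp add: gate_ok_def gate_mat_def is_T_gate_def)
next
  case (Tg j)
  then have "j < n" using g by (simp add: gate_ok_def)
  then have "pauli_coeffs_in n (Suc t) (phase_on n j (cis (pi / 4)) * A * dagger (phase_on n j (cis (pi / 4))))"
    using T_phase_conditions[of "cis (pi / 4)"] by (intro pauli_coeffs_in_phase_conj[OF A]) auto
  then show ?thesis by (simp add: Tg gate_mat_def is_T_gate_def T_on_eq_phase_on)
next
  case (Tdg j)
  then have "j < n" using g by (simp add: gate_ok_def)
  then have "pauli_coeffs_in n (Suc t) (phase_on n j (cis (- pi / 4)) * A * dagger (phase_on n j (cis (- pi / 4))))"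
    using T_phase_conditions[of "cis (- pi / 4)"] by (intro pauli_coeffs_in_phase_conj[OF A]) auto
  then show ?thesis by (simp add: Tdg gate_mat_def is_T_gate_def Tdg_on_eq_phase_on)
qed

lemma circuit_mat_carrier: "\<forall>g\<in>set gs. gate_ok n g \<Longrightarrow> circuit_mat n gs \<in> carrier_mat (2^n) (2^n)"
  by (induction gs) (auto intro: gate_mat_carrier mult_carrier_mat)

lemma pauli_coeffs_in_circuit_conj:
  "\<forall>g\<in>set gs. gate_ok n g \<Longrightarrow> pauli_coeffs_in n t A \<Longrightarrow>
   pauli_coeffs_in n (t + t_count gs) (circuit_mat n gs * A * dagger (circuit_mat n gs))"
proof (induction gs arbitrary: t A)
  case Nil
  then show ?case by (auto simp: t_count_def pauli_coeffs_in_def)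
next
  case (Cons g gs)
  let ?G = "gate_mat n g" and ?V = "circuit_mat n gs"
  have g: "gate_ok n g" and gs: "\<forall>g\<in>set gs. gate_ok n g" using Cons.prems by auto
  have Ac: "A \<in> carrier_mat (2^n) (2^n)" using Cons.prems by (simp add: pauli_coeffs_in_def)
  have Gc: "?G \<in> carrier_mat (2^n) (2^n)" and Vc: "?V \<in> carrier_mat (2^n) (2^n)"
    using gate_mat_carrier[OF g] circuit_mat_carrier[OF gs] .
  have "circuit_mat n (g # gs) * A * dagger (circuit_mat n (g # gs)) = ?V * (?G * A * dagger ?G) * dagger ?V"
    using Gc Vc Ac by (simp add: dagger_mult[OF Vc Gc] assoc_mult_mat[of _ "2^n" "2^n" _ "2^n" _ "2^n"]
        mult_carrier_mat[of _ "2^n" "2^n"])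
  moreover have "t_count (g # gs) = (if is_T_gate g then 1 else 0) + t_count gs"
    by (simp add: t_count_def)
  ultimately show ?case
    using Cons.IH[OF gs pauli_coeffs_in_gate_conj[OF g Cons.prems(2)]] by (simp add: add.assoc)
qed

lemma CkZ_eq_mat_diag: "CkZ k = mat_diag (2^(k+1)) (\<lambda>r. if r = 2^(k+1) - 1 then -1 else 1)"
  by (auto intro!: eq_matI simp: CkZ_def mat_diag_def)

lemma dagger_CkZ: "dagger (CkZ k) = CkZ k"
  by (rule eq_matI) (auto simp: dagger_def CkZ_def)

lemma trace_mult_diag_conj:
  fixes A :: "'a::comm_semiring_0 mat"
  assumes A: "A \<in> carrier_mat N N"
  shows "trace (A * (mat_diag N d * A * mat_diag N d)) =
    (\<Sum>r<N. \<Sum>c<N. A $$ (r, c) * A $$ (c, r) * d c * d r)"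
proof -
  have "(mat_diag N d * A * mat_diag N d) $$ (c, r) = d c * A $$ (c, r) * d r" if "c < N" "r < N" for c r
    using A that by (simp add: mat_diag_mult_left[of _ N N] mat_diag_mult_right[of _ N N])
  then show ?thesis
    using A by (auto simp: trace_mult[of _ N N] mult_carrier_mat[of _ N N] mult_ac intro!: sum.cong)
qed

lemma double_sum_sign_flip:
  fixes F :: "nat \<Rightarrow> nat \<Rightarrow> 'a::comm_ring_1"
  assumes "L < N"
  shows "(\<Sum>r<N. \<Sum>c<N. F r c * (if c = L then -1 else 1) * (if r = L then -1 else 1)) =
    (\<Sum>r<N. \<Sum>c<N. F r c) - 2 * (\<Sum>r<N. F r L) - 2 * (\<Sum>c<N. F L c) + 4 * F L L"
proof -
  have L: "L \<in> {..<N}" using assms by simp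
  have expand: "F r c * (if c = L then -1 else 1) * (if r = L then -1 else 1) =
      F r c - 2 * (if c = L then F r c else 0) - 2 * (if r = L then F r c else 0)
      + 4 * (if r = L then if c = L then F r c else 0 else 0)" for r c
    by simp
  have inner: "(\<Sum>c<N. F r c * (if c = L then -1 else 1) * (if r = L then -1 else 1)) =
      (\<Sum>c<N. F r c) - 2 * F r L - 2 * (if r = L then \<Sum>c<N. F r c else 0)
      + 4 * (if r = L then F r L else 0)" for r
    unfolding expand using L
    by (simp add: sum.distrib sum_subtractf sum_distrib_left[symmetric] sum.delta'
        if_distrib[of "\<lambda>x. 2 * x"] if_distrib[of "\<lambda>x. 4 * x"])
  show ?thesis
    unfolding inner using L by (simp add: sum.distrib sum_subtractf sum_distrib_left[symmetric] sum.delta')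
qed

lemma pauli_X0_entry_sums:
  fixes n :: nat
  defines "X \<equiv> pauli_tensor n (\<lambda>i. if i = 0 then PX else PI)" and "L \<equiv> 2^n - 1"
  assumes n: "n \<ge> 1"
  shows "(\<Sum>r<2^n. \<Sum>c<2^n. X $$ (r, c) * X $$ (c, r)) = 2^n"
    and "(\<Sum>r<2^n. X $$ (r, L) * X $$ (L, r)) = 1"
    and "(\<Sum>c<2^n. X $$ (L, c) * X $$ (c, L)) = 1"
    and "X $$ (L, L) * X $$ (L, L) = 0"
proof -
  define f :: "nat \<Rightarrow> nat \<Rightarrow> nat \<Rightarrow> complex"
    where "f j a b = pauli1_entry (if j = 0 then PX else PI) a b * pauli1_entry (if j = 0 then PX else PI) b a"
    for j a b
  have F: "X $$ (r, c) * X $$ (c, r) = (\<Prod>j<n. f j (qbit j r) (qbit j c))" if "r < 2^n" "c < 2^n" for r c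
    using that unfolding X_def f_def by (simp only: index_pauli_tensor prod.distrib)
  have L: "L < 2^n"
    by (simp add: L_def)
  have qbit_L: "qbit j L = 1" if "j < n" for j
    unfolding L_def using that by (rule qbit_mask)
  have "(\<Sum>r<2^n. \<Sum>c<2^n. X $$ (r, c) * X $$ (c, r)) =
      (\<Sum>r<2^n. \<Sum>c<2^n. \<Prod>j<n. f j (qbit j r) (qbit j c))"
    by (intro sum.cong refl) (simp add: F)
  also have "\<dots> = (\<Prod>j<n. \<Sum>a<2. \<Sum>b<2. f j a b)"
    by (rule sum_sum_prod_qbit)
  also have "\<dots> = (\<Prod>j<n. 2)"
    by (intro prod.cong refl) (simp add: f_def sum_less_2)
  finally show "(\<Sum>r<2^n. \<Sum>c<2^n. X $$ (r, c) * X $$ (c, r)) = 2^n"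
    by simp
  have "(\<Sum>r<2^n. X $$ (r, L) * X $$ (L, r)) = (\<Sum>r<2^n. \<Prod>j<n. f j (qbit j r) 1)"
    using L by (intro sum.cong refl) (simp only: lessThan_iff F, intro prod.cong refl, simp only: lessThan_iff qbit_L)
  also have "\<dots> = (\<Prod>j<n. f j 0 1 + f j 1 1)"
    by (rule sum_prod_qbit)
  also have "\<dots> = (\<Prod>j<n. 1)"
    by (intro prod.cong refl) (simp add: f_def)
  finally show "(\<Sum>r<2^n. X $$ (r, L) * X $$ (L, r)) = 1"
    by simp
  have "(\<Sum>c<2^n. X $$ (L, c) * X $$ (c, L)) = (\<Sum>c<2^n. \<Prod>j<n. f j 1 (qbit j c))"
    using L by (intro sum.cong refl) (simp only: lessThan_iff F, intro prod.cong refl, simp only: lessThan_iff qbit_L)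
  also have "\<dots> = (\<Prod>j<n. f j 1 0 + f j 1 1)"
    by (rule sum_prod_qbit)
  also have "\<dots> = (\<Prod>j<n. 1)"
    by (intro prod.cong refl) (simp add: f_def)
  finally show "(\<Sum>c<2^n. X $$ (L, c) * X $$ (c, L)) = 1"
    by simp
  have "X $$ (L, L) * X $$ (L, L) = (\<Prod>j<n. f j 1 1)"
    using L by (simp only: F, intro prod.cong refl, simp only: lessThan_iff qbit_L)
  also have "\<dots> = 0"
    using n by (intro prod_zero) (auto simp: f_def intro: bexI[of _ 0])
  finally show "X $$ (L, L) * X $$ (L, L) = 0" .
qed

lemma trace_X0_CkZ_conj:
  fixes k :: nat
  defines "X\<^sub>0 \<equiv> pauli_tensor (k + 1) (\<lambda>i. if i = 0 then PX else PI)"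
  shows "trace (X\<^sub>0 * (CkZ k * X\<^sub>0 * dagger (CkZ k))) = 2^(k+1) - 4"
proof -
  let ?N = "2^(k+1) :: nat" and ?L = "2^(k+1) - 1 :: nat"
  have "trace (X\<^sub>0 * (CkZ k * X\<^sub>0 * dagger (CkZ k))) = (\<Sum>r<?N. \<Sum>c<?N.
      X\<^sub>0 $$ (r, c) * X\<^sub>0 $$ (c, r) * (if c = ?L then -1 else 1) * (if r = ?L then -1 else 1))"
    unfolding dagger_CkZ unfolding CkZ_eq_mat_diag X\<^sub>0_def by (rule trace_mult_diag_conj[OF pauli_tensor_carrier])
  also have "\<dots> = (\<Sum>r<?N. \<Sum>c<?N. X\<^sub>0 $$ (r, c) * X\<^sub>0 $$ (c, r))
      - 2 * (\<Sum>r<?N. X\<^sub>0 $$ (r, ?L) * X\<^sub>0 $$ (?L, r)) - 2 * (\<Sum>c<?N. X\<^sub>0 $$ (?L, c) * X\<^sub>0 $$ (c, ?L))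
      + 4 * (X\<^sub>0 $$ (?L, ?L) * X\<^sub>0 $$ (?L, ?L))"
    by (rule double_sum_sign_flip) simp
  also have "\<dots> = 2^(k+1) - 2 * 1 - 2 * 1 + 4 * 0"
    unfolding X\<^sub>0_def by (simp only: pauli_X0_entry_sums[of "k + 1", OF le_add2])
  finally show ?thesis by simp
qed

theorem mainTheorem12:
  fixes k :: nat and gs :: "gate list"
  assumes "k \<ge> 1"
    and "\<forall>g \<in> set gs. gate_ok (k + 1) g"
    and "circuit_mat (k + 1) gs = CkZ k"
  shows "t_count gs \<ge> 2 * k - 2"
proof (cases "k = 1")
  case False
  let ?X\<^sub>0 = "pauli_tensor (k + 1) (\<lambda>i. if i = 0 then PX else PI)"
  have "pauli_coeffs_in (k + 1) (t_count gs) (CkZ k * ?X\<^sub>0 * dagger (CkZ k))"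
    using pauli_coeffs_in_circuit_conj[OF assms(2) pauli_coeffs_in_pauli_tensor] assms(3) by simp
  then have "trace (?X\<^sub>0 * (CkZ k * ?X\<^sub>0 * dagger (CkZ k))) / 2^(k+1) \<in> sqrt2_denom (t_count gs)"
    unfolding pauli_coeffs_in_def by blast
  then have X\<^sub>0_coeff: "(2^(k+1) - 4) / 2^(k+1) \<in> sqrt2_denom (t_count gs)"
    by (simp only: trace_X0_CkZ_conj)
  have "(2^(k+1) - 4) / 2^(k+1) = of_int (2^(k-1) - 1) / (2::complex)^(k-1)"
  proof -
    have "(2::complex)^(k+1) = 4 * 2^(k-1)" using assms(1) by (cases k) simp_all
    then show ?thesis by (simp add: field_simps)
  qed
  moreover have "odd ((2::int)^(k-1) - 1)" using False assms(1) by simp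
  ultimately have "2 * (k - 1) \<le> t_count gs"
    using X\<^sub>0_coeff odd_dyadic_sqrt2_denom by metis
  then show ?thesis by simp
qed simp

end
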